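(* Let $n$ be a positive integer and let $G$ be a pure $(2n+1)$-sparse gapset of genus $g=3n+2$ with multiplicity $m$. If $G$ is pseudo-symmetric, then $m=2n+1$.
   Context: A gapset is a finite set $G\subset\mathbb{N}=\{1,2,\dots\}$ such that whenever $z\in G$ and $z=x+y$ with $x,y\in\mathbb{N}$, then $x\in G$ or $y\in G$; its genus is $g=\#G$. Writing $G=\{\ell_1<\dots<\ell_g\}$, multiplicity $m(G)=\min\{s\in\mathbb{N}:s\notin G\}$, Frobenius number $F(G)=\ell_g$; $G$ is pseudo-symmetric if $F(G)=2g-2$. $G$ is pure $\kappa$-sparse if $\ell_{i+1}-\ell_i\le\kappa$ for all $i$ with equality for some $i$. *)

theory Defs
  imports Main
begin

definition gapset :: "nat set \<Rightarrow> bool" where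
  "gapset G \<longleftrightarrow> finite G \<and> 0 \<notin> G \<and>
     (\<forall>z\<in>G. \<forall>x y. x \<ge> 1 \<and> y \<ge> 1 \<and> z = x + y \<longrightarrow> x \<in> G \<or> y \<in> G)"

definition genus :: "nat set \<Rightarrow> nat" where
  "genus G = card G"

definition multiplicity :: "nat set \<Rightarrow> nat" where
  "multiplicity G = (LEAST s. s \<ge> 1 \<and> s \<notin> G)"

definition frobenius :: "nat set \<Rightarrow> nat" where
  "frobenius G = Max G"

definition pseudo_symmetric :: "nat set \<Rightarrow> bool" where
  "pseudo_symmetric G \<longleftrightarrow> frobenius G = 2 * genus G - 2"

definition consecutive :: "nat set \<Rightarrow> nat \<Rightarrow> nat \<Rightarrow> bool" where
  "consecutive G x y \<longleftrightarrow> x \<in> G \<and> y \<in> G \<and> x < y \<and> (\<forall>z\<in>G. \<not> (x < z \<and> z < y))"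

definition pure_sparse :: "nat \<Rightarrow> nat set \<Rightarrow> bool" where
  "pure_sparse \<kappa> G \<longleftrightarrow> (\<forall>x y. consecutive G x y \<longrightarrow> y - x \<le> \<kappa>) \<and>
     (\<exists>x y. consecutive G x y \<and> y - x = \<kappa>)"

end

theory Submission
  imports Defs
begin

text \<open>
  Lower bound: if \<open>m\<close> is a non-gap and \<open>x < y\<close> are consecutive gaps with \<open>y - x > m\<close>,
  then writing \<open>y = m + (y - m)\<close> forces the gap \<open>y - m\<close> strictly between \<open>x\<close> and \<open>y\<close>.
  So the jump \<open>2n + 1\<close> bounds \<open>m\<close> from below.

  Upper bound: for a pseudo-symmetric gapset with Frobenius number \<open>F = 2g - 2\<close>, the
  reflection \<open>s \<mapsto> F - s\<close> maps the \<open>g - 1\<close> non-gaps in \<open>[0, F]\<close> injectively into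
  \<open>G - {F div 2}\<close>, which has the same size; hence \<open>z\<close> and \<open>F - z\<close> are both gaps only for
  \<open>z = F div 2\<close>. If \<open>m > 2n + 1\<close>, then \<open>1, \<dots>, 2n + 1\<close> are gaps, so
  \<open>F - 1, \<dots>, F - (2n + 1)\<close> are not, and the gap preceding \<open>F = 6n + 2\<close> lies more than
  \<open>2n + 1\<close> below it, contradicting sparsity.
\<close>

lemma gapset_has_nongap:
  assumes "gapset G"
  shows "\<exists>s. 1 \<le> s \<and> s \<notin> G"
proof -
  have "finite (insert 0 G)" using assms by (simp add: gapset_def)
  then have "z \<le> Max (insert 0 G)" if "z \<in> G" for z using that by simp
  then have "Suc (Max (insert 0 G)) \<notin> G" by (meson Suc_n_not_le_n)
  then show ?thesis by (intro exI[of _ "Suc (Max (insert 0 G))"]) simp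
qed

lemma gapset_summand_in:
  "gapset G \<Longrightarrow> x + y \<in> G \<Longrightarrow> 1 \<le> x \<Longrightarrow> 1 \<le> y \<Longrightarrow> x \<in> G \<or> y \<in> G"
  unfolding gapset_def by blast

lemma multiplicity_ge_1: "gapset G \<Longrightarrow> 1 \<le> multiplicity G"
  unfolding multiplicity_def using LeastI_ex[OF gapset_has_nongap] by blast

lemma multiplicity_notin: "gapset G \<Longrightarrow> multiplicity G \<notin> G"
  unfolding multiplicity_def using LeastI_ex[OF gapset_has_nongap] by blast

lemma less_multiplicity_in: "1 \<le> s \<Longrightarrow> s < multiplicity G \<Longrightarrow> s \<in> G"
  unfolding multiplicity_def using not_less_Least by blast

lemma consecutive_diff_le_multiplicity:
  assumes "gapset G" and "consecutive G x y"
  shows "y - x \<le> multiplicity G"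
proof (rule ccontr)
  let ?m = "multiplicity G"
  assume "\<not> y - x \<le> ?m"
  moreover have "1 \<le> ?m" "?m \<notin> G"
    using multiplicity_ge_1[OF assms(1)] multiplicity_notin[OF assms(1)] by auto
  moreover have "y \<in> G" "x < y" and between: "\<forall>z\<in>G. \<not> (x < z \<and> z < y)"
    using assms(2) by (auto simp: consecutive_def)
  ultimately have "y - ?m \<in> G"
    using gapset_summand_in[OF assms(1), of ?m "y - ?m"] by simp
  moreover have "x < y - ?m" "y - ?m < y" using \<open>\<not> y - x \<le> ?m\<close> \<open>1 \<le> ?m\<close> by auto
  ultimately show False using between by blast
qed

lemma frobenius_in: "finite G \<Longrightarrow> G \<noteq> {} \<Longrightarrow> frobenius G \<in> G"
  by (simp add: frobenius_def)

lemma le_frobenius: "finite G \<Longrightarrow> z \<in> G \<Longrightarrow> z \<le> frobenius G"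
  by (simp add: frobenius_def)

lemma frobenius_minus_nongap_in:
  assumes "gapset G" "G \<noteq> {}" "s \<notin> G" "s \<le> frobenius G"
  shows "frobenius G - s \<in> G"
proof (cases "s = 0")
  case True
  then show ?thesis using assms(1,2) by (simp add: gapset_def frobenius_in)
next
  case False
  let ?F = "frobenius G"
  have "?F \<in> G" using assms(1,2) by (simp add: gapset_def frobenius_in)
  moreover have "s < ?F" using assms(3,4) \<open>?F \<in> G\<close> by (cases "s = ?F") auto
  ultimately show ?thesis
    using gapset_summand_in[OF assms(1), of s "?F - s"] assms(3) False by simp
qed

lemma pseudo_symmetric_gap_pair:
  assumes "gapset G" "pseudo_symmetric G" "z \<in> G" "frobenius G - z \<in> G"
  shows "2 * z = frobenius G"
proof (rule ccontr)
  let ?F = "frobenius G" and ?g = "card G"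
  assume "2 * z \<noteq> ?F"
  have fin: "finite G" and ne: "G \<noteq> {}" using assms(1,3) by (auto simp: gapset_def)
  then have "?g \<ge> 1" by (simp add: Suc_leI card_gt_0_iff)
  then have F: "?F = 2 * (?g - 1)"
    using assms(2) by (simp add: pseudo_symmetric_def genus_def)
  define T where "T = {0..?F} - G"
  define r where "r s = ?F - s" for s
  have "G \<subseteq> {0..?F}" using fin le_frobenius by auto
  then have "card T = ?g - 1" using F \<open>?g \<ge> 1\<close> card_Diff_subset[OF fin] by (simp add: T_def)
  moreover have "inj_on r T" by (auto simp: inj_on_def r_def T_def)
  ultimately have card_image: "card (r ` T) = ?g - 1" by (simp add: card_image)
  have image_in: "r ` T \<subseteq> G"
    using frobenius_minus_nongap_in[OF assms(1) ne] by (auto simp: r_def T_def)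
  have half_in: "?g - 1 \<in> G"
  proof (rule ccontr)
    assume "?g - 1 \<notin> G"
    then have "?g - 1 \<in> T" using F by (simp add: T_def)
    then have "r (?g - 1) \<in> G" using image_in by blast
    with \<open>?g - 1 \<notin> G\<close> show False using F by (simp add: r_def)
  qed
  have "?g - 1 \<notin> r ` T"
  proof
    assume "?g - 1 \<in> r ` T"
    then obtain s where "s \<in> T" "?g - 1 = ?F - s" by (auto simp: r_def)
    moreover from \<open>s \<in> T\<close> have "s \<le> ?F" by (simp add: T_def)
    ultimately have "s = ?g - 1" using F by arith
    with \<open>s \<in> T\<close> half_in show False by (simp add: T_def)
  qed
  then have "r ` T \<subseteq> G - {?g - 1}" using image_in by blast
  then have "r ` T = G - {?g - 1}"
    using card_subset_eq[of "G - {?g - 1}"] fin half_in card_image by simp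
  moreover have "z \<noteq> ?g - 1" using \<open>2 * z \<noteq> ?F\<close> F by simp
  ultimately obtain s where "s \<in> T" "z = ?F - s" using assms(3) by (auto simp: r_def)
  moreover from \<open>s \<in> T\<close> have "s \<le> ?F" "s \<notin> G" by (simp_all add: T_def)
  ultimately show False using assms(4) by simp
qed

lemma consecutive_predecessor:
  assumes "finite G" "a \<in> G" "b \<in> G" "a < b"
  shows "\<exists>x. consecutive G x b \<and> a \<le> x"
proof -
  define A where "A = {z \<in> G. z < b}"
  have "finite A" "a \<in> A" using assms by (simp_all add: A_def)
  then have "Max A \<in> A" "a \<le> Max A" using Max_in by auto
  then have "Max A \<in> G" "Max A < b" by (simp_all add: A_def)
  moreover have "z \<le> Max A" if "z \<in> G" "z < b" for z
    using \<open>finite A\<close> that by (simp add: A_def)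
  ultimately have "consecutive G (Max A) b"
    using assms(3) by (metis consecutive_def leD)
  with \<open>a \<le> Max A\<close> show ?thesis by blast
qed

lemma pseudo_symmetric_multiplicity_le:
  assumes "gapset G" "pseudo_symmetric G" "0 < \<kappa>"
    and sparse: "\<And>x y. consecutive G x y \<Longrightarrow> y - x \<le> \<kappa>"
    and "2 * \<kappa> < frobenius G"
  shows "multiplicity G \<le> \<kappa>"
proof (rule ccontr)
  let ?F = "frobenius G"
  assume "\<not> multiplicity G \<le> \<kappa>"
  then have small_in: "s \<in> G" if "1 \<le> s" "s \<le> \<kappa>" for s
    using that less_multiplicity_in by simp
  have fin: "finite G" using assms(1) by (simp add: gapset_def)
  have "1 \<in> G" using small_in assms(3) by simp
  then have "?F \<in> G" using fin frobenius_in by blast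
  have top_notin: "?F - k \<notin> G" if "1 \<le> k" "k \<le> \<kappa>" for k
    using pseudo_symmetric_gap_pair[OF assms(1,2) small_in[OF that]] that assms(5) by auto
  obtain x where "consecutive G x ?F"
    using consecutive_predecessor[OF fin \<open>1 \<in> G\<close> \<open>?F \<in> G\<close>] assms(3,5) by auto
  moreover have "?F - x > \<kappa>"
  proof (rule ccontr)
    assume "\<not> ?F - x > \<kappa>"
    moreover have "x \<in> G" "x < ?F" using \<open>consecutive G x ?F\<close> by (auto simp: consecutive_def)
    ultimately have "?F - (?F - x) \<notin> G" by (intro top_notin) auto
    with \<open>x \<in> G\<close> \<open>x < ?F\<close> show False by simp
  qed
  ultimately show False using sparse by fastforce
qed

theorem mainTheorem12:
  fixes n :: nat and G :: "nat set"
  assumes "n \<ge> 1"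
    and "gapset G"
    and "pure_sparse (2 * n + 1) G"
    and "genus G = 3 * n + 2"
    and "pseudo_symmetric G"
  shows "multiplicity G = 2 * n + 1"
proof (rule antisym)
  obtain x y where "consecutive G x y" "y - x = 2 * n + 1"
    using assms(3) by (auto simp: pure_sparse_def)
  then show "2 * n + 1 \<le> multiplicity G"
    using consecutive_diff_le_multiplicity[OF assms(2)] by metis
next
  have "frobenius G = 6 * n + 2"
    using assms(4,5) by (simp add: pseudo_symmetric_def)
  then show "multiplicity G \<le> 2 * n + 1"
    using pseudo_symmetric_multiplicity_le[OF assms(2,5)] assms(1,3)
    by (simp add: pure_sparse_def)
qed

end
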